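(* Let $C=\{(c_1,\dots,c_e)\in\mathbb{R}^e: c_1\ge-(c_2+\dots+c_e),\ c_i\ge0\ \text{for } 2\le i\le e\}$ and let $f\in\mathbb{K}[[\underline{x}]][y]$ be monic of degree $n\ge1$. Then $f$ is irreducible in $\mathbb{K}_C[[\underline{x}]][y]$ if and only if $F(X_1,\dots,X_e,y)=f(X_1,X_2X_1,\dots,X_eX_1,y)$ is irreducible in $\mathbb{K}[[\underline{X}]][y]$.
   Context: $\mathbb{K}$ is an algebraically closed field of characteristic $0$, $\underline{x}=(x_1,\dots,x_e)$, $\underline{X}=(X_1,\dots,X_e)$. $C$ is a line free cone, and $\mathbb{K}_C[[\underline{x}]]$ denotes the ring of formal series $\sum_{p\in C\cap\mathbb{Z}^e}a_p\underline{x}^p$; it contains $\mathbb{K}[[\underline{x}]]$. Irreducibility of a monic polynomial of degree $n$ in $A[y]$ means it is not a product of two monic polynomials of $A[y]$ of $y$-degrees strictly between $0$ and $n$. *)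

theory Defs
  imports "HOL-Computational_Algebra.Polynomial"
begin

text \<open>Exponent vectors in Z^e are functions nat => int vanishing from index e on;
  coordinate i (0-based) corresponds to the paper's x_(i+1).\<close>

type_synonym 'k series = "(nat \<Rightarrow> int) \<Rightarrow> 'k"

definition nat_exps :: "nat \<Rightarrow> (nat \<Rightarrow> int) set" where
  "nat_exps e = {p. (\<forall>i. e \<le> i \<longrightarrow> p i = 0) \<and> (\<forall>i<e. 0 \<le> p i)}"

definition coneC_exps :: "nat \<Rightarrow> (nat \<Rightarrow> int) set" where
  "coneC_exps e = {p. (\<forall>i. e \<le> i \<longrightarrow> p i = 0)
      \<and> - (\<Sum>i\<in>{1..<e}. p i) \<le> p 0 \<and> (\<forall>i\<in>{1..<e}. 0 \<le> p i)}"

definition series_ring :: "(nat \<Rightarrow> int) set \<Rightarrow> 'k::zero series set" where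
  "series_ring S = {a. \<forall>p. p \<notin> S \<longrightarrow> a p = 0}"

text \<open>Cauchy product in K_S[[x]] (the index set is finite for the cones used here).\<close>
definition series_mult :: "(nat \<Rightarrow> int) set \<Rightarrow> 'k::comm_semiring_1 series \<Rightarrow> 'k series \<Rightarrow> 'k series" where
  "series_mult S a b r =
     (\<Sum>pq\<in>{(p, q). p \<in> S \<and> q \<in> S \<and> (\<lambda>i. p i + q i) = r}. a (fst pq) * b (snd pq))"

definition series_one :: "'k::{zero,one} series" where
  "series_one p = (if p = (\<lambda>_. 0) then 1 else 0)"

text \<open>Polynomials in y over K_S[[x]]: coefficient functions nat => series.
  Monic of degree n means coefficients in the ring, leading coefficient 1, zero above n.\<close>
definition monic_poly_over :: "'k::{zero,one} series set \<Rightarrow> nat \<Rightarrow> (nat \<Rightarrow> 'k series) \<Rightarrow> bool" where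
  "monic_poly_over A n f \<longleftrightarrow>
     (\<forall>k<n. f k \<in> A) \<and> f n = series_one \<and> (\<forall>k. n < k \<longrightarrow> f k = (\<lambda>_. 0))"

definition poly_mult_over :: "(nat \<Rightarrow> int) set \<Rightarrow> (nat \<Rightarrow> 'k::comm_semiring_1 series)
     \<Rightarrow> (nat \<Rightarrow> 'k series) \<Rightarrow> (nat \<Rightarrow> 'k series)" where
  "poly_mult_over S g h k = (\<lambda>r. \<Sum>i\<le>k. series_mult S (g i) (h (k - i)) r)"

definition irreducible_over :: "(nat \<Rightarrow> int) set \<Rightarrow> nat \<Rightarrow> (nat \<Rightarrow> 'k::comm_semiring_1 series) \<Rightarrow> bool" where
  "irreducible_over S n f \<longleftrightarrow>
     \<not> (\<exists>d g h. 0 < d \<and> d < n \<and> monic_poly_over (series_ring S) d g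
          \<and> monic_poly_over (series_ring S) (n - d) h \<and> f = poly_mult_over S g h)"

text \<open>Substitution x_1 = X_1, x_i = X_i X_1 (i \<ge> 2): the monomial x^p goes to X^q with
  q_1 = p_1 + ... + p_e and q_i = p_i, so the coefficient of X^q is that of x^p with
  p = (q_1 - (q_2+...+q_e), q_2, ..., q_e) when p \<in> N^e, and 0 otherwise.\<close>
definition blowup_exp :: "nat \<Rightarrow> (nat \<Rightarrow> int) \<Rightarrow> (nat \<Rightarrow> int)" where
  "blowup_exp e q = q(0 := q 0 - (\<Sum>i\<in>{1..<e}. q i))"

definition blowup_series :: "nat \<Rightarrow> 'k::zero series \<Rightarrow> 'k series" where
  "blowup_series e a q = (if blowup_exp e q \<in> nat_exps e then a (blowup_exp e q) else 0)"

end

theory Submission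
  imports Defs
begin

text \<open>The substitution is a monomial change of variables: the coefficient of X^q in F is the
  coefficient of x^(B q) in f, where B = blowup_exp e is an additive bijection of Z^e carrying
  N^e onto the lattice points of C. Composition with such a B is therefore a ring isomorphism
  from K_C[[x]] onto K[[X]]; applied coefficientwise it is an isomorphism of the polynomial rings
  in y that preserves monic polynomials and their degrees, hence monic factorisations in both
  directions.\<close>

definition exponent_iso ::
    "(nat \<Rightarrow> int) set \<Rightarrow> (nat \<Rightarrow> int) set \<Rightarrow> ((nat \<Rightarrow> int) \<Rightarrow> (nat \<Rightarrow> int)) \<Rightarrow> bool" where
  "exponent_iso T S \<phi> \<longleftrightarrow> bij \<phi> \<and> (\<forall>p q. \<phi> (\<lambda>i. p i + q i) = (\<lambda>i. \<phi> p i + \<phi> q i))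
      \<and> (\<forall>p. \<phi> p \<in> S \<longleftrightarrow> p \<in> T)"

lemma exponent_iso_zero:
  assumes "exponent_iso T S \<phi>"
  shows "\<phi> p = (\<lambda>_. 0) \<longleftrightarrow> p = (\<lambda>_. 0)"
proof -
  have inj: "inj \<phi>" and add: "\<And>p q. \<phi> (\<lambda>i. p i + q i) = (\<lambda>i. \<phi> p i + \<phi> q i)"
    using assms unfolding exponent_iso_def by (auto simp: bij_is_inj)
  from add[of "\<lambda>_. 0" "\<lambda>_. 0"] have "\<phi> (\<lambda>_. 0) = (\<lambda>_. 0)"
    by (simp add: fun_eq_iff)
  then show ?thesis
    using inj by (metis inj_eq)
qed

lemma exponent_iso_inv:
  assumes "exponent_iso T S \<phi>"
  shows "exponent_iso S T (inv \<phi>)"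
proof -
  have bij: "bij \<phi>" and add: "\<And>p q. \<phi> (\<lambda>i. p i + q i) = (\<lambda>i. \<phi> p i + \<phi> q i)"
    and mem: "\<And>p. \<phi> p \<in> S \<longleftrightarrow> p \<in> T"
    using assms unfolding exponent_iso_def by auto
  have inv_add: "inv \<phi> (\<lambda>i. p i + q i) = (\<lambda>i. inv \<phi> p i + inv \<phi> q i)" for p q
  proof -
    have "\<phi> (\<lambda>i. inv \<phi> p i + inv \<phi> q i) = (\<lambda>i. p i + q i)"
      using add[of "inv \<phi> p" "inv \<phi> q"] bij by (simp add: bij_is_surj surj_f_inv_f)
    then show ?thesis
      using bij by (metis bij_inv_eq_iff)
  qed
  moreover have "inv \<phi> p \<in> T \<longleftrightarrow> p \<in> S" for p
    using mem[of "inv \<phi> p"] bij by (simp add: bij_is_surj surj_f_inv_f)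
  ultimately show ?thesis
    unfolding exponent_iso_def using bij_imp_bij_inv[OF bij] by simp
qed

lemma series_mult_comp:
  assumes "exponent_iso T S \<phi>"
  shows "series_mult S a b (\<phi> r) = series_mult T (a \<circ> \<phi>) (b \<circ> \<phi>) r"
proof -
  let ?\<psi> = "inv \<phi>"
  have bij: "bij \<phi>" and add: "\<And>p q. (\<lambda>i. \<phi> p i + \<phi> q i) = \<phi> (\<lambda>i. p i + q i)"
    and mem: "\<And>p. \<phi> p \<in> S \<longleftrightarrow> p \<in> T"
    using assms unfolding exponent_iso_def by auto
  have inv_add: "\<And>p q. (\<lambda>i. ?\<psi> p i + ?\<psi> q i) = ?\<psi> (\<lambda>i. p i + q i)"
    and inv_mem: "\<And>p. ?\<psi> p \<in> T \<longleftrightarrow> p \<in> S"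
    using exponent_iso_inv[OF assms] unfolding exponent_iso_def by auto
  have inv_f: "\<And>p. ?\<psi> (\<phi> p) = p" and f_inv: "\<And>p. \<phi> (?\<psi> p) = p"
    using bij by (simp_all add: bij_is_inj bij_is_surj surj_f_inv_f)
  show ?thesis
    unfolding series_mult_def
    by (rule sum.reindex_bij_witness[where i = "map_prod \<phi> \<phi>" and j = "map_prod ?\<psi> ?\<psi>"])
      (auto simp: add inv_add mem inv_mem inv_f f_inv)
qed

lemma poly_mult_over_comp:
  assumes "exponent_iso T S \<phi>"
  shows "(\<lambda>k. poly_mult_over S g h k \<circ> \<phi>)
       = poly_mult_over T (\<lambda>k. g k \<circ> \<phi>) (\<lambda>k. h k \<circ> \<phi>)"
  unfolding poly_mult_over_def by (simp add: fun_eq_iff series_mult_comp[OF assms])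

lemma monic_poly_over_comp:
  assumes "exponent_iso T S \<phi>" and "monic_poly_over (series_ring S) d g"
  shows "monic_poly_over (series_ring T) d (\<lambda>k. g k \<circ> \<phi>)"
proof -
  have "series_one \<circ> \<phi> = series_one"
    using exponent_iso_zero[OF assms(1)] by (auto simp: series_one_def)
  then show ?thesis
    using assms unfolding monic_poly_over_def series_ring_def exponent_iso_def by auto
qed

lemma reducible_over_comp:
  assumes "exponent_iso T S \<phi>" and "\<not> irreducible_over S n f"
  shows "\<not> irreducible_over T n (\<lambda>k. f k \<circ> \<phi>)"
proof -
  obtain d g h where "0 < d" "d < n"
    and "monic_poly_over (series_ring S) d g" "monic_poly_over (series_ring S) (n - d) h"
    and "f = poly_mult_over S g h"
    using assms(2) unfolding irreducible_over_def by blast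
  then show ?thesis
    unfolding irreducible_over_def
    using monic_poly_over_comp[OF assms(1)] poly_mult_over_comp[OF assms(1)] by metis
qed

lemma irreducible_over_comp_iff:
  assumes "exponent_iso T S \<phi>"
  shows "irreducible_over T n (\<lambda>k. f k \<circ> \<phi>) \<longleftrightarrow> irreducible_over S n f"
proof -
  have "(\<lambda>k. f k \<circ> \<phi> \<circ> inv \<phi>) = f"
    using assms unfolding exponent_iso_def
    by (simp add: comp_assoc surj_iff[THEN iffD1, OF bij_is_surj])
  then show ?thesis
    using reducible_over_comp[OF assms] reducible_over_comp[OF exponent_iso_inv[OF assms],
        of n "\<lambda>k. f k \<circ> \<phi>"]
    by auto
qed

definition unblowup_exp :: "nat \<Rightarrow> (nat \<Rightarrow> int) \<Rightarrow> (nat \<Rightarrow> int)" where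
  "unblowup_exp e p = p(0 := p 0 + (\<Sum>i\<in>{1..<e}. p i))"

lemma sum_atLeast1_fun_upd_0: "(\<Sum>i\<in>{1..<e::nat}. (p(0 := v)) i) = (\<Sum>i\<in>{1..<e}. p i)"
  by (rule sum.cong) auto

lemma bij_blowup_exp: "bij (blowup_exp e)"
proof (rule o_bij)
  show "unblowup_exp e \<circ> blowup_exp e = id" and "blowup_exp e \<circ> unblowup_exp e = id"
    by (auto simp: blowup_exp_def unblowup_exp_def sum_atLeast1_fun_upd_0)
qed

lemma blowup_exp_in_coneC_exps_iff: "blowup_exp e p \<in> coneC_exps e \<longleftrightarrow> p \<in> nat_exps e"
proof -
  have sum_eq: "(\<Sum>i\<in>{1..<e}. blowup_exp e p i) = (\<Sum>i\<in>{1..<e}. p i)"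
    unfolding blowup_exp_def by (rule sum_atLeast1_fun_upd_0)
  have same: "blowup_exp e p i = p i" if "i \<noteq> 0" for i
    using that by (simp add: blowup_exp_def)
  have "(\<forall>i<e. 0 \<le> p i) \<longleftrightarrow> 0 \<le> p 0 \<and> (\<forall>i\<in>{1..<e}. 0 \<le> p i)" if "0 < e"
    using that by (metis atLeastLessThan_iff less_one linorder_not_less)
  then show ?thesis
    unfolding coneC_exps_def nat_exps_def mem_Collect_eq sum_eq
    by (cases "e = 0") (auto simp: same blowup_exp_def)
qed

lemma blowup_exp_add:
  "blowup_exp e (\<lambda>i. p i + q i) = (\<lambda>i. blowup_exp e p i + blowup_exp e q i)"
  by (auto simp: blowup_exp_def sum.distrib)

lemma exponent_iso_blowup_exp: "exponent_iso (nat_exps e) (coneC_exps e) (blowup_exp e)"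
  by (simp add: exponent_iso_def bij_blowup_exp blowup_exp_add blowup_exp_in_coneC_exps_iff)

lemma blowup_series_eq_comp:
  assumes "a \<in> series_ring (nat_exps e)"
  shows "blowup_series e a = a \<circ> blowup_exp e"
  using assms unfolding blowup_series_def series_ring_def by auto

lemma monic_poly_over_coeff_in_series_ring:
  assumes "monic_poly_over (series_ring S) n f" and "(\<lambda>_. 0) \<in> S"
  shows "f k \<in> series_ring S"
  using assms unfolding monic_poly_over_def series_ring_def series_one_def
  by (cases k n rule: linorder_cases) auto

theorem mainTheorem17:
  fixes f :: "nat \<Rightarrow> 'k::field_char_0 series" and e n :: nat
  assumes alg_closed: "\<forall>p::'k poly. 0 < degree p \<longrightarrow> (\<exists>x. poly p x = 0)"
    and "1 \<le> e" and "1 \<le> n"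
    and "monic_poly_over (series_ring (nat_exps e)) n f"
  shows "irreducible_over (coneC_exps e) n f
     \<longleftrightarrow> irreducible_over (nat_exps e) n (\<lambda>k. blowup_series e (f k))"
proof -
  have "(\<lambda>_. 0) \<in> nat_exps e"
    by (simp add: nat_exps_def)
  then have "(\<lambda>k. blowup_series e (f k)) = (\<lambda>k. f k \<circ> blowup_exp e)"
    using monic_poly_over_coeff_in_series_ring[OF assms(4)] blowup_series_eq_comp by blast
  then show ?thesis
    using irreducible_over_comp_iff[OF exponent_iso_blowup_exp] by metis
qed

end
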